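(* Let $\mathsf{T}$ be a rooted plane tree and $\delta\in\mathcal{O}(\mathsf{T})$. Adjoin an imaginary node $\omega$ as the parent of the root, and set $\delta(\omega)=\mathsf{Pop}(\delta)(\omega)=\mathsf{T}\cup\{\omega\}$. Then for any two nodes $u,v\in\mathsf{T}\cup\{\omega\}$, the sets $\delta(u)$ and $\mathsf{Pop}(\delta)(v)$ are either nested (one contains the other) or disjoint.
   Context: A rooted plane tree $\mathsf{T}$ is a finite tree with a distinguished root, regarded as a poset $\leq_\mathsf{T}$ in which $v'\leq_\mathsf{T} v$ iff $v$ lies on the path from $v'$ to the root. An ornament is a nonempty set of nodes inducing a connected subgraph; an ornamentation is a map $\delta$ from nodes to ornaments such that the unique maximal element of $\delta(v)$ is $v$ and any two sets $\delta(v),\delta(v')$ are nested or disjoint. $\mathcal{O}(\mathsf{T})$ is the set of ornamentations ordered by $\delta\leq\delta'$ iff $\delta(v)\subseteq\delta'(v)$ for all $v$; it is a lattice with meet given by pointwise intersection. $\mathsf{Pop}(\delta)=\bigwedge(\{\delta\}\cup\{\delta':\delta'\lessdot\delta\})$, where $\lessdot$ is the cover relation. *)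

theory Defs
  imports Main
begin

text \<open>The root is its own parent (par r = r); every node reaches the root by iterating par.
  (The planar structure plays no role for ornamentations and is omitted.)\<close>
definition rooted_tree :: "'a set \<Rightarrow> 'a \<Rightarrow> ('a \<Rightarrow> 'a) \<Rightarrow> bool" where
  "rooted_tree V r par \<longleftrightarrow> finite V \<and> r \<in> V \<and> par r = r \<and>
     (\<forall>v\<in>V. par v \<in> V) \<and> (\<forall>v\<in>V. \<exists>k. (par ^^ k) v = r)"

definition tree_le :: "'a set \<Rightarrow> ('a \<Rightarrow> 'a) \<Rightarrow> 'a \<Rightarrow> 'a \<Rightarrow> bool" where
  "tree_le V par x y \<longleftrightarrow> x \<in> V \<and> y \<in> V \<and> (\<exists>k. (par ^^ k) x = y)"

definition tree_adj :: "'a set \<Rightarrow> 'a \<Rightarrow> ('a \<Rightarrow> 'a) \<Rightarrow> 'a \<Rightarrow> 'a \<Rightarrow> bool" where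
  "tree_adj V r par x y \<longleftrightarrow> x \<in> V \<and> y \<in> V \<and>
     ((x \<noteq> r \<and> par x = y) \<or> (y \<noteq> r \<and> par y = x))"

definition induces_connected :: "'a set \<Rightarrow> 'a \<Rightarrow> ('a \<Rightarrow> 'a) \<Rightarrow> 'a set \<Rightarrow> bool" where
  "induces_connected V r par S \<longleftrightarrow>
     (\<forall>x\<in>S. \<forall>y\<in>S. (x, y) \<in> {(a, b). a \<in> S \<and> b \<in> S \<and> tree_adj V r par a b}\<^sup>*)"

definition ornament :: "'a set \<Rightarrow> 'a \<Rightarrow> ('a \<Rightarrow> 'a) \<Rightarrow> 'a set \<Rightarrow> bool" where
  "ornament V r par S \<longleftrightarrow> S \<noteq> {} \<and> S \<subseteq> V \<and> induces_connected V r par S"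

definition nested_or_disjoint :: "'a set \<Rightarrow> 'a set \<Rightarrow> bool" where
  "nested_or_disjoint A B \<longleftrightarrow> A \<subseteq> B \<or> B \<subseteq> A \<or> A \<inter> B = {}"

definition ornamentations :: "'a set \<Rightarrow> 'a \<Rightarrow> ('a \<Rightarrow> 'a) \<Rightarrow> ('a \<Rightarrow> 'a set) set" where
  "ornamentations V r par = {\<delta>.
     (\<forall>v\<in>V. ornament V r par (\<delta> v)) \<and>
     (\<forall>v\<in>V. {w \<in> \<delta> v. \<forall>w'\<in>\<delta> v. tree_le V par w w' \<longrightarrow> w' = w} = {v}) \<and>
     (\<forall>v\<in>V. \<forall>v'\<in>V. nested_or_disjoint (\<delta> v) (\<delta> v')) \<and>
     (\<forall>v. v \<notin> V \<longrightarrow> \<delta> v = {})}"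

definition orn_le :: "'a set \<Rightarrow> ('a \<Rightarrow> 'a set) \<Rightarrow> ('a \<Rightarrow> 'a set) \<Rightarrow> bool" where
  "orn_le V \<delta> \<delta>' \<longleftrightarrow> (\<forall>v\<in>V. \<delta> v \<subseteq> \<delta>' v)"

definition orn_covered :: "'a set \<Rightarrow> 'a \<Rightarrow> ('a \<Rightarrow> 'a) \<Rightarrow> ('a \<Rightarrow> 'a set) \<Rightarrow> ('a \<Rightarrow> 'a set) \<Rightarrow> bool" where
  "orn_covered V r par \<delta>' \<delta> \<longleftrightarrow>
     \<delta>' \<in> ornamentations V r par \<and> \<delta> \<in> ornamentations V r par \<and>
     orn_le V \<delta>' \<delta> \<and> \<delta>' \<noteq> \<delta> \<and>
     \<not> (\<exists>\<gamma>\<in>ornamentations V r par. orn_le V \<delta>' \<gamma> \<and> orn_le V \<gamma> \<delta> \<and> \<gamma> \<noteq> \<delta>' \<and> \<gamma> \<noteq> \<delta>)"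

text \<open>Pop: meet (= pointwise intersection) of \<delta> and all elements it covers.\<close>
definition Pop :: "'a set \<Rightarrow> 'a \<Rightarrow> ('a \<Rightarrow> 'a) \<Rightarrow> ('a \<Rightarrow> 'a set) \<Rightarrow> ('a \<Rightarrow> 'a set)" where
  "Pop V r par \<delta> = (\<lambda>v. \<delta> v \<inter> (\<Inter>{\<delta>' v | \<delta>'. orn_covered V r par \<delta>' \<delta>}))"

end

theory Submission
  imports Defs
begin

text \<open>
  Let \<delta>' be covered by \<delta> and let \<delta>(u) \<subseteq> \<delta>(v) with u \<noteq> v. If \<delta>(u) met \<delta>'(v) without lying
  inside it, enlarging by \<delta>(u) every \<delta>'(w) with w \<notin> \<delta>(u) that meets \<delta>(u) would give an
  ornamentation \<gamma> with \<delta>' < \<gamma> \<le> \<delta>. Ornaments are convex (with a node they contain the whole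
  path up to their top), so all enlarged sets contain u and stay nested. Covering forces \<gamma> = \<delta>,
  hence \<delta>'(u) = \<delta>(u), which is neither nested with nor disjoint from \<delta>'(v). So every \<delta>'(v)
  contains \<delta>(u) or misses it, and so does their intersection Pop(\<delta>)(v). Otherwise
  \<delta>(v) \<subseteq> \<delta>(u) or the two are disjoint, and Pop(\<delta>)(v) \<subseteq> \<delta>(v) inherits this. The extra
  node \<omega> is harmless because its set contains all others.
\<close>

abbreviation tree_maxima :: "'a set \<Rightarrow> ('a \<Rightarrow> 'a) \<Rightarrow> 'a set \<Rightarrow> 'a set" where
  "tree_maxima V par S \<equiv> {w \<in> S. \<forall>w'\<in>S. tree_le V par w w' \<longrightarrow> w' = w}"

definition absorb :: "'a set \<Rightarrow> ('a \<Rightarrow> 'a set) \<Rightarrow> 'a \<Rightarrow> 'a set" where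
  "absorb A \<delta> w = (if w \<notin> A \<and> \<delta> w \<inter> A \<noteq> {} then \<delta> w \<union> A else \<delta> w)"

lemma nested_or_disjoint_commute: "nested_or_disjoint A B \<longleftrightarrow> nested_or_disjoint B A"
  unfolding nested_or_disjoint_def by blast

lemma funpow_split: "n \<le> m \<Longrightarrow> (f ^^ m) x = (f ^^ (m - n)) ((f ^^ n) x)"
  by (metis comp_apply funpow_add le_add_diff_inverse2)

lemma tree_le_refl: "x \<in> V \<Longrightarrow> tree_le V par x x"
  unfolding tree_le_def by (metis funpow_0)

lemma tree_le_trans: "tree_le V par x y \<Longrightarrow> tree_le V par y z \<Longrightarrow> tree_le V par x z"
  unfolding tree_le_def by (metis comp_apply funpow_add)

lemma induces_connected_Un:
  assumes S: "induces_connected V r par S" and T: "induces_connected V r par T"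
    and meet: "S \<inter> T \<noteq> {}"
  shows "induces_connected V r par (S \<union> T)"
  unfolding induces_connected_def
proof (intro ballI)
  let ?R = "\<lambda>S. {(a, b). a \<in> S \<and> b \<in> S \<and> tree_adj V r par a b}"
  obtain p where p: "p \<in> S" "p \<in> T" using meet by blast
  have "(?R S)\<^sup>* \<subseteq> (?R (S \<union> T))\<^sup>*" "(?R T)\<^sup>* \<subseteq> (?R (S \<union> T))\<^sup>*"
    by (rule rtrancl_mono, blast)+
  moreover have "(x, p) \<in> (?R S)\<^sup>* \<and> (p, x) \<in> (?R S)\<^sup>* \<or> (x, p) \<in> (?R T)\<^sup>* \<and> (p, x) \<in> (?R T)\<^sup>*"
    if "x \<in> S \<union> T" for x
    using S T p that unfolding induces_connected_def by blast
  ultimately have via_p: "(x, p) \<in> (?R (S \<union> T))\<^sup>* \<and> (p, x) \<in> (?R (S \<union> T))\<^sup>*"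
    if "x \<in> S \<union> T" for x
    using that by blast
  fix x y assume "x \<in> S \<union> T" "y \<in> S \<union> T"
  then show "(x, y) \<in> (?R (S \<union> T))\<^sup>*"
    using rtrancl_trans[of x p _ y] via_p by blast
qed

lemma ornament_Un:
  assumes "ornament V r par S" "ornament V r par T" "S \<inter> T \<noteq> {}"
  shows "ornament V r par (S \<union> T)"
  using assms induces_connected_Un[of V r par S T] unfolding ornament_def by auto

lemma ornamentationsD:
  assumes "\<delta> \<in> ornamentations V r par"
  shows "v \<in> V \<Longrightarrow> ornament V r par (\<delta> v)"
    and "v \<in> V \<Longrightarrow> tree_maxima V par (\<delta> v) = {v}"
    and "v \<in> V \<Longrightarrow> v' \<in> V \<Longrightarrow> nested_or_disjoint (\<delta> v) (\<delta> v')"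
    and "v \<notin> V \<Longrightarrow> \<delta> v = {}"
  using assms unfolding ornamentations_def by auto

lemma ornamentation_self_mem: "\<delta> \<in> ornamentations V r par \<Longrightarrow> v \<in> V \<Longrightarrow> v \<in> \<delta> v"
  using ornamentationsD(2) by fastforce

lemma ornamentation_subset: "\<delta> \<in> ornamentations V r par \<Longrightarrow> \<delta> v \<subseteq> V"
  using ornamentationsD(1,4)[of \<delta> V r par v] unfolding ornament_def by (cases "v \<in> V") simp_all

lemma ornamentation_superset_if_meets:
  assumes "\<delta> \<in> ornamentations V r par" "u \<in> V" "w \<in> V" "w \<notin> \<delta> u" "\<delta> w \<inter> \<delta> u \<noteq> {}"
  shows "\<delta> u \<subseteq> \<delta> w"
  using ornamentationsD(3)[OF assms(1) assms(3,2)] ornamentation_self_mem[OF assms(1,3)] assms(4,5)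
  unfolding nested_or_disjoint_def by blast

lemma Pop_subset: "Pop V r par \<delta> v \<subseteq> \<delta> v"
  unfolding Pop_def by blast

lemma tree_maxima_subset:
  assumes "tree_maxima V par T = {w}" "\<forall>x\<in>T. tree_le V par x w" "w \<in> S" "S \<subseteq> T"
  shows "tree_maxima V par S = {w}"
  using assms by blast

context
  fixes V :: "'a set" and r :: 'a and par :: "'a \<Rightarrow> 'a"
  assumes tree: "rooted_tree V r par"
begin

lemma funpow_par_root: "(par ^^ n) r = r"
  using tree by (induction n) (auto simp: rooted_tree_def)

lemma funpow_par_in: "x \<in> V \<Longrightarrow> (par ^^ n) x \<in> V"
  using tree by (induction n) (auto simp: rooted_tree_def)

lemma tree_le_funpow_par: "x \<in> V \<Longrightarrow> tree_le V par x ((par ^^ n) x)"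
  unfolding tree_le_def using funpow_par_in by blast

lemma tree_le_root_eq: "tree_le V par r z \<Longrightarrow> z = r"
  unfolding tree_le_def using funpow_par_root by auto

lemma tree_le_antisym:
  assumes "tree_le V par x y" "tree_le V par y x"
  shows "x = y"
proof -
  obtain k m where k: "(par ^^ k) x = y" and m: "(par ^^ m) y = x" and "x \<in> V"
    using assms unfolding tree_le_def by auto
  then obtain d where d: "(par ^^ d) x = r"
    using tree unfolding rooted_tree_def by auto
  show ?thesis
  proof (cases "m + k = 0")
    case False
    have cycle: "(par ^^ (m + k)) x = x"
      using k m by (simp add: funpow_add)
    \<comment> \<open>Going around the cycle d times passes through the root, which is fixed.\<close>
    have "x = (par ^^ (d * (m + k))) x"
      using funpow_mod_eq[OF cycle, of "d * (m + k)"] by simp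
    also have "\<dots> = (par ^^ (d * (m + k) - d)) r"
    proof -
      have "d \<le> d * (m + k)" using False by auto
      then show ?thesis using funpow_split d by metis
    qed
    finally have "x = r"
      using funpow_par_root by simp
    then show ?thesis
      using k funpow_par_root by simp
  qed (use k in simp)
qed

lemma ornament_parent_mem:
  assumes S: "ornament V r par S" and top: "tree_maxima V par S = {w}"
    and x: "x \<in> S" "x \<noteq> w"
  shows "par x \<in> S"
proof (rule ccontr)
  assume parx: "par x \<notin> S"
  let ?R = "{(a, b). a \<in> S \<and> b \<in> S \<and> tree_adj V r par a b}"
  have below_x: "tree_le V par y x" if "(x, y) \<in> ?R\<^sup>*" for y
    using that
  proof (induction rule: rtrancl_induct)
    case base
    show ?case using x S by (auto simp: ornament_def intro: tree_le_refl)
  next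
    case (step y z)
    have "z \<in> S" "tree_adj V r par y z"
      using step.hyps(2) by auto
    then have "z \<in> V" "tree_adj V r par y z"
      using S unfolding ornament_def by auto
    then consider "par y = z" | "par z = y"
      unfolding tree_adj_def by blast
    then show ?case
    proof cases
      case 1
      obtain k where k: "(par ^^ k) y = x"
        using step.IH unfolding tree_le_def by auto
      have "k \<noteq> 0" using k 1 parx \<open>z \<in> S\<close> by (metis funpow_0)
      then have "(par ^^ (k - 1)) z = x"
        using funpow_split[of 1 k par y] k 1 by simp
      then show ?thesis
        using \<open>z \<in> V\<close> step.IH unfolding tree_le_def by blast
    next
      case 2
      then have "tree_le V par z y"
        using tree_le_funpow_par[OF \<open>z \<in> V\<close>, of 1] by simp
      then show ?thesis
        using step.IH by (rule tree_le_trans)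
    qed
  qed
  have below_S: "tree_le V par z x" if "z \<in> S" for z
  proof -
    have "(x, z) \<in> ?R\<^sup>*"
      using S x(1) that unfolding ornament_def induces_connected_def by blast
    then show ?thesis by (rule below_x)
  qed
  have "z = x" if "z \<in> S" "tree_le V par x z" for z
    using tree_le_antisym[OF that(2) below_S[OF that(1)]] by simp
  then have "x \<in> tree_maxima V par S"
    using x(1) by blast
  then show False
    using top x(2) by blast
qed

lemma ornament_le_top:
  assumes S: "ornament V r par S" and top: "tree_maxima V par S = {w}" and x: "x \<in> S"
  shows "tree_le V par x w"
proof -
  have "x \<in> V" using S x by (auto simp: ornament_def)
  then obtain k where k: "(par ^^ k) x = r"
    using tree unfolding rooted_tree_def by auto
  have climb: "(par ^^ i) x \<in> S \<or> (\<exists>j. (par ^^ j) x = w)" for i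
  proof (induction i)
    case (Suc i)
    then show ?case
      using ornament_parent_mem[OF S top, of "(par ^^ i) x"] by auto
  qed (use x in simp)
  \<comment> \<open>If the climb from x never meets w, it reaches the root r, which is maximal in every set.\<close>
  have "r \<in> S \<Longrightarrow> r = w"
    using top tree_le_root_eq by blast
  then obtain j where "(par ^^ j) x = w"
    using climb[of k] k by auto
  then show ?thesis
    using tree_le_funpow_par \<open>x \<in> V\<close> by blast
qed

lemma ornament_mem_between:
  assumes S: "ornament V r par S" and top: "tree_maxima V par S = {w}"
    and x: "x \<in> S" and xz: "tree_le V par x z" and zw: "tree_le V par z w"
  shows "z \<in> S"
proof -
  obtain j where j: "(par ^^ j) x = z" and "x \<in> V"
    using xz unfolding tree_le_def by auto
  have "i \<le> j \<Longrightarrow> (par ^^ i) x \<in> S" for i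
  proof (induction i)
    case (Suc i)
    then have IH: "(par ^^ i) x \<in> S" by simp
    show ?case
    proof (cases "(par ^^ i) x = w")
      case True
      \<comment> \<open>par w still lies below z, hence below w, so the climb stays at w.\<close>
      have "z = (par ^^ (j - Suc i)) ((par ^^ Suc i) x)"
        unfolding j[symmetric] by (rule funpow_split[OF Suc.prems])
      then have "tree_le V par ((par ^^ Suc i) x) z"
        using tree_le_funpow_par[OF funpow_par_in[OF \<open>x \<in> V\<close>], of "Suc i"] by (simp del: funpow.simps)
      moreover have "tree_le V par w ((par ^^ Suc i) x)"
        using True tree_le_funpow_par[of w 1] IH S by (auto simp: ornament_def)
      ultimately have "(par ^^ Suc i) x = w"
        using zw tree_le_antisym tree_le_trans by metis
      then show ?thesis using IH True by simp
    qed (use ornament_parent_mem[OF S top IH] in simp)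
  qed (use x in simp)
  then show ?thesis using j by blast
qed

lemma ornamentation_le_top:
  assumes "\<delta> \<in> ornamentations V r par" "w \<in> V" "a \<in> \<delta> w"
  shows "tree_le V par a w"
  using ornament_le_top[OF ornamentationsD(1,2)[OF assms(1,2)] assms(3)] .

lemma ornamentation_subset_if_mem:
  assumes \<delta>: "\<delta> \<in> ornamentations V r par" and u: "u \<in> V" and w: "w \<in> \<delta> u"
  shows "\<delta> w \<subseteq> \<delta> u"
proof -
  have "w \<in> V" using ornamentation_subset[OF \<delta>] w by blast
  have "\<delta> w \<subseteq> \<delta> u" if "\<delta> u \<subseteq> \<delta> w"
  proof -
    have "tree_le V par u w"
      using ornamentation_le_top[OF \<delta> \<open>w \<in> V\<close>] ornamentation_self_mem[OF \<delta> u] that by blast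
    then have "u = w"
      using tree_le_antisym ornamentation_le_top[OF \<delta> u w] by blast
    then show ?thesis by simp
  qed
  then show ?thesis
    using ornamentationsD(3)[OF \<delta> \<open>w \<in> V\<close> u] ornamentation_self_mem[OF \<delta> \<open>w \<in> V\<close>] w
    unfolding nested_or_disjoint_def by blast
qed

lemma ornamentation_mem_if_meets:
  assumes \<delta>: "\<delta> \<in> ornamentations V r par" and \<delta>': "\<delta>' \<in> ornamentations V r par"
    and le: "orn_le V \<delta>' \<delta>" and u: "u \<in> V" and w: "w \<in> V" "w \<notin> \<delta> u"
    and meets: "\<delta>' w \<inter> \<delta> u \<noteq> {}"
  shows "u \<in> \<delta>' w"
proof -
  obtain a where a: "a \<in> \<delta>' w" "a \<in> \<delta> u" using meets by blast
  have "\<delta> w \<inter> \<delta> u \<noteq> {}" using a le w(1) unfolding orn_le_def by blast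
  then have "\<delta> u \<subseteq> \<delta> w"
    using ornamentation_superset_if_meets[OF \<delta> u w] by blast
  then have "tree_le V par u w"
    using ornamentation_le_top[OF \<delta> w(1)] ornamentation_self_mem[OF \<delta> u] by blast
  moreover have "tree_le V par a u"
    using ornamentation_le_top[OF \<delta> u a(2)] .
  ultimately show ?thesis
    using ornament_mem_between[OF ornamentationsD(1,2)[OF \<delta>' w(1)] a(1)] by blast
qed

lemma absorb_subset:
  assumes \<delta>: "\<delta> \<in> ornamentations V r par" and le: "orn_le V \<delta>' \<delta>"
    and u: "u \<in> V" and w: "w \<in> V"
  shows "absorb (\<delta> u) \<delta>' w \<subseteq> \<delta> w"
proof -
  have "\<delta>' w \<subseteq> \<delta> w" using le w unfolding orn_le_def by blast
  moreover have "\<delta> u \<subseteq> \<delta> w" if "w \<notin> \<delta> u" "\<delta>' w \<inter> \<delta> u \<noteq> {}"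
    using ornamentation_superset_if_meets[OF \<delta> u w that(1)] that(2) calculation by blast
  ultimately show ?thesis
    unfolding absorb_def by auto
qed

lemma nested_or_disjoint_absorb:
  assumes \<delta>: "\<delta> \<in> ornamentations V r par" and \<delta>': "\<delta>' \<in> ornamentations V r par"
    and le: "orn_le V \<delta>' \<delta>" and u: "u \<in> V" and w: "w \<in> V" "w' \<in> V"
  shows "nested_or_disjoint (absorb (\<delta> u) \<delta>' w) (absorb (\<delta> u) \<delta>' w')"
proof -
  define A where "A = \<delta> u"
  define E where "E a \<longleftrightarrow> a \<notin> A \<and> \<delta>' a \<inter> A \<noteq> {}" for a
  have absorb_eq: "absorb A \<delta>' a = (if E a then \<delta>' a \<union> A else \<delta>' a)" for a
    unfolding absorb_def E_def ..
  have nested: "nested_or_disjoint (\<delta>' a) (\<delta>' b)" if "a \<in> V" "b \<in> V" for a b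
    using ornamentationsD(3)[OF \<delta>' that] .
  \<comment> \<open>All sets that absorb A share the node u, so they form a chain.\<close>
  have both: "nested_or_disjoint (\<delta>' a \<union> A) (\<delta>' b \<union> A)"
    if "a \<in> V" "E a" "b \<in> V" "E b" for a b
  proof -
    have "u \<in> \<delta>' a" "u \<in> \<delta>' b"
      using ornamentation_mem_if_meets[OF \<delta> \<delta>' le u] that unfolding E_def A_def by blast+
    then show ?thesis
      using nested[OF that(1,3)] unfolding nested_or_disjoint_def by blast
  qed
  have mixed: "nested_or_disjoint (\<delta>' a \<union> A) (\<delta>' b)"
    if a: "a \<in> V" "E a" and b: "b \<in> V" "\<not> E b" for a b
  proof (cases "b \<in> A")
    case True
    then have "\<delta>' b \<subseteq> A"
      using le b(1) ornamentation_subset_if_mem[OF \<delta> u] unfolding orn_le_def A_def by blast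
    then show ?thesis
      unfolding nested_or_disjoint_def by blast
  next
    case False
    then have "\<delta>' b \<inter> A = {}" using b(2) unfolding E_def by blast
    moreover have "\<not> \<delta>' a \<subseteq> \<delta>' b" using a(2) calculation unfolding E_def by blast
    ultimately show ?thesis
      using nested[OF a(1) b(1)] unfolding nested_or_disjoint_def by blast
  qed
  show ?thesis
    unfolding A_def[symmetric] absorb_eq
    using both[OF w(1) _ w(2)] mixed[OF w(1) _ w(2)] mixed[OF w(2) _ w(1)] nested[OF w]
    by (auto simp: nested_or_disjoint_commute)
qed

lemma absorb_ornamentation:
  assumes \<delta>: "\<delta> \<in> ornamentations V r par" and \<delta>': "\<delta>' \<in> ornamentations V r par"
    and le: "orn_le V \<delta>' \<delta>" and u: "u \<in> V"
  shows "absorb (\<delta> u) \<delta>' \<in> ornamentations V r par"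
  unfolding ornamentations_def
proof (intro CollectI conjI ballI allI impI)
  fix w assume w: "w \<in> V"
  show "ornament V r par (absorb (\<delta> u) \<delta>' w)"
    using ornament_Un[OF ornamentationsD(1)[OF \<delta>' w] ornamentationsD(1)[OF \<delta> u]]
      ornamentationsD(1)[OF \<delta>' w]
    unfolding absorb_def by simp
  have "w \<in> absorb (\<delta> u) \<delta>' w"
    using ornamentation_self_mem[OF \<delta>' w] unfolding absorb_def by simp
  then show "tree_maxima V par (absorb (\<delta> u) \<delta>' w) = {w}"
    using tree_maxima_subset[OF ornamentationsD(2)[OF \<delta> w]] ornamentation_le_top[OF \<delta> w]
      absorb_subset[OF \<delta> le u w] by blast
next
  fix w w' assume "w \<in> V" "w' \<in> V"
  then show "nested_or_disjoint (absorb (\<delta> u) \<delta>' w) (absorb (\<delta> u) \<delta>' w')"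
    by (rule nested_or_disjoint_absorb[OF \<delta> \<delta>' le u])
next
  fix w assume "w \<notin> V"
  then show "absorb (\<delta> u) \<delta>' w = {}"
    using ornamentationsD(4)[OF \<delta>'] unfolding absorb_def by simp
qed

lemma orn_covered_disjoint_or_subset:
  assumes cov: "orn_covered V r par \<delta>' \<delta>" and u: "u \<in> V" and v: "v \<in> V"
    and uv: "\<delta> u \<subseteq> \<delta> v" "u \<noteq> v"
  shows "\<delta> u \<inter> \<delta>' v = {} \<or> \<delta> u \<subseteq> \<delta>' v"
proof (rule ccontr)
  assume "\<not> ?thesis"
  then obtain x y where x: "x \<in> \<delta> u" "x \<in> \<delta>' v" and y: "y \<in> \<delta> u" "y \<notin> \<delta>' v"
    by blast
  have \<delta>: "\<delta> \<in> ornamentations V r par" and \<delta>': "\<delta>' \<in> ornamentations V r par"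
    and le: "orn_le V \<delta>' \<delta>"
    and cover: "\<And>\<gamma>. \<gamma> \<in> ornamentations V r par \<Longrightarrow> orn_le V \<delta>' \<gamma> \<Longrightarrow> orn_le V \<gamma> \<delta> \<Longrightarrow>
      \<gamma> = \<delta>' \<or> \<gamma> = \<delta>"
    using cov unfolding orn_covered_def by blast+
  let ?\<gamma> = "absorb (\<delta> u) \<delta>'"
  have "v \<notin> \<delta> u"
  proof
    assume "v \<in> \<delta> u"
    moreover have "tree_le V par u v"
      using ornamentation_le_top[OF \<delta> v] ornamentation_self_mem[OF \<delta> u] uv(1) by blast
    ultimately show False
      using tree_le_antisym ornamentation_le_top[OF \<delta> u] uv(2) by blast
  qed
  then have "y \<in> ?\<gamma> v"
    using x y(1) unfolding absorb_def by auto
  then have "?\<gamma> \<noteq> \<delta>'"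
    using y(2) by auto
  moreover have "orn_le V \<delta>' ?\<gamma>" "orn_le V ?\<gamma> \<delta>"
    using absorb_subset[OF \<delta> le u] unfolding orn_le_def absorb_def by auto
  ultimately have "?\<gamma> = \<delta>"
    using cover absorb_ornamentation[OF \<delta> \<delta>' le u] by blast
  moreover have "?\<gamma> u = \<delta>' u"
    using ornamentation_self_mem[OF \<delta> u] unfolding absorb_def by simp
  ultimately have "\<delta>' u = \<delta> u"
    by simp
  moreover have "u \<in> \<delta>' v"
    using ornamentation_mem_if_meets[OF \<delta> \<delta>' le u v \<open>v \<notin> \<delta> u\<close>] x by blast
  ultimately show False
    using ornamentationsD(3)[OF \<delta>' u v] ornamentation_self_mem[OF \<delta>' u]
      ornamentation_self_mem[OF \<delta>' v] \<open>v \<notin> \<delta> u\<close> y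
    unfolding nested_or_disjoint_def by blast
qed

lemma nested_or_disjoint_Pop:
  assumes \<delta>: "\<delta> \<in> ornamentations V r par" and u: "u \<in> V" and v: "v \<in> V"
  shows "nested_or_disjoint (\<delta> u) (Pop V r par \<delta> v)"
proof (cases "\<delta> u \<subseteq> \<delta> v \<and> u \<noteq> v")
  case True
  then have "\<delta> u \<inter> \<delta>' v = {} \<or> \<delta> u \<subseteq> \<delta>' v" if "orn_covered V r par \<delta>' \<delta>" for \<delta>'
    using orn_covered_disjoint_or_subset[OF that u v] by blast
  then have "\<delta> u \<inter> Pop V r par \<delta> v = {} \<or> \<delta> u \<subseteq> Pop V r par \<delta> v"
    using True unfolding Pop_def by blast
  then show ?thesis
    unfolding nested_or_disjoint_def by blast
next
  case False
  then have "\<delta> v \<subseteq> \<delta> u \<or> \<delta> u \<inter> \<delta> v = {}"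
    using ornamentationsD(3)[OF \<delta> u v] unfolding nested_or_disjoint_def by blast
  then show ?thesis
    using Pop_subset[of V r par \<delta> v] unfolding nested_or_disjoint_def by blast
qed

end

theorem lemma4p1:
  fixes V :: "'a set" and r :: 'a and par :: "'a \<Rightarrow> 'a"
    and \<delta> :: "'a \<Rightarrow> 'a set" and \<omega> u v :: 'a
  assumes "rooted_tree V r par"
    and "\<delta> \<in> ornamentations V r par"
    and "\<omega> \<notin> V"
    and "u \<in> insert \<omega> V" and "v \<in> insert \<omega> V"
  shows "nested_or_disjoint ((\<delta>(\<omega> := insert \<omega> V)) u)
                            (((Pop V r par \<delta>)(\<omega> := insert \<omega> V)) v)"
proof -
  have sub: "\<delta> w \<subseteq> insert \<omega> V" "Pop V r par \<delta> w \<subseteq> insert \<omega> V" for w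
    using ornamentation_subset[OF assms(2), of w] Pop_subset[of V r par \<delta> w] by blast+
  consider "u = \<omega>" | "v = \<omega>" "u \<noteq> \<omega>" | "u \<in> V" "v \<in> V" "u \<noteq> \<omega>" "v \<noteq> \<omega>"
    using assms(3-5) by blast
  then show ?thesis
  proof cases
    case 1
    then show ?thesis using sub(2) unfolding nested_or_disjoint_def by simp
  next
    case 2
    then show ?thesis using sub(1) unfolding nested_or_disjoint_def by simp
  next
    case 3
    then show ?thesis using nested_or_disjoint_Pop[OF assms(1,2)] by simp
  qed
qed

end
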